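(* Let $p$ be a prime, $A\in \mathbb{Z}^{m\times n}$, $b\in \mathbb{Z}^m$. If $\{x:Ax=b\}$ contains a $p$-adic point, then the $p$-adic points of $\{x:Ax=b\}$ form a dense subset of it. In particular, a nonempty rational polyhedron contains a $p$-adic point if, and only if, its affine hull contains a $p$-adic point.
   Context: A $p$-adic rational is a number $a/p^k$ with $a,k\in\mathbb{Z}$, $k\ge0$; a vector is $p$-adic if all entries are $p$-adic rationals. *)

theory Defs
  imports "HOL-Analysis.Analysis"
begin

definition padic_rat :: "nat \<Rightarrow> real \<Rightarrow> bool" where
  "padic_rat p r \<longleftrightarrow> (\<exists>(a::int) (k::nat). r = of_int a / (of_nat p) ^ k)"

definition padic_vec :: "nat \<Rightarrow> real ^ 'n \<Rightarrow> bool" where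
  "padic_vec p x \<longleftrightarrow> (\<forall>i. padic_rat p (x $ i))"

definition int_mat_to_real :: "int ^ 'n ^ 'm \<Rightarrow> real ^ 'n ^ 'm" where
  "int_mat_to_real A = (\<chi> i j. of_int (A $ i $ j))"

definition int_vec_to_real :: "int ^ 'm \<Rightarrow> real ^ 'm" where
  "int_vec_to_real b = (\<chi> i. of_int (b $ i))"

definition polyhedron :: "real ^ 'n ^ 'k \<Rightarrow> real ^ 'k \<Rightarrow> (real ^ 'n) set" where
  "polyhedron C d = {x. \<forall>i. (C *v x) $ i \<le> d $ i}"

end

theory Submission
  imports Defs
begin

(*
  The solution set of A x = b is x0 + L with L the orthogonal complement of the rows of A,
  which are rational. Gram-Schmidt over the rationals yields an orthogonal projection onto L
  that maps rational vectors to rational vectors; projecting p-adic (hence rational)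
  approximations of a point of L shows that the rational points of L are dense in L.
  A rational q in L equals v / N with v integral, and p-adic rationals t close to 1 / N give
  p-adic points t v of L close to q. Translating by a p-adic solution x0 gives density in
  the whole solution set.

  For a polyhedron P whose affine hull contains a p-adic point, let E be the affine space
  cut out by the implicit equalities of P. It contains the affine hull of P, so its p-adic
  points are dense in E. A relative interior point of P satisfies all other inequalities
  strictly, hence the p-adic points of E close to it lie in P.
*)

lemma padic_rat_of_int: "padic_rat p (of_int a)"
  unfolding padic_rat_def by (metis div_by_1 power_0)

lemma padic_rat_add:
  assumes "p > 0" "padic_rat p x" "padic_rat p y"
  shows "padic_rat p (x + y)"
proof -
  obtain a k b l where x: "x = of_int a / real p ^ k" and y: "y = of_int b / real p ^ l"
    using assms unfolding padic_rat_def by blast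
  have "x + y = of_int (a * int p ^ l + b * int p ^ k) / real p ^ (k + l)"
    using assms(1) by (simp add: x y field_simps power_add)
  then show ?thesis
    unfolding padic_rat_def by blast
qed

lemma padic_rat_mult:
  assumes "padic_rat p x" "padic_rat p y"
  shows "padic_rat p (x * y)"
proof -
  obtain a k b l where x: "x = of_int a / real p ^ k" and y: "y = of_int b / real p ^ l"
    using assms unfolding padic_rat_def by blast
  have "x * y = of_int (a * b) / real p ^ (k + l)"
    by (simp add: x y power_add)
  then show ?thesis
    unfolding padic_rat_def by blast
qed

lemma padic_rat_imp_Rats: "padic_rat p r \<Longrightarrow> r \<in> \<rat>"
  unfolding padic_rat_def by auto

lemma closure_padic_rat:
  assumes "p \<ge> 2"
  shows "closure {r. padic_rat p r} = UNIV"
proof -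
  have "r \<in> closure {r. padic_rat p r}" for r
  proof -
    define t where "t k = of_int \<lfloor>r * real p ^ k\<rfloor> / real p ^ k" for k
    have "(\<lambda>k. frac (r * real p ^ k) / real p ^ k) \<longlonglongrightarrow> 0"
    proof (rule tendsto_sandwich[of "\<lambda>_. 0" _ _ "\<lambda>k. inverse (real p ^ k)"])
      show "(\<lambda>k. inverse (real p ^ k)) \<longlonglongrightarrow> 0"
        using assms by (intro LIMSEQ_inverse_realpow_zero) simp
      show "\<forall>\<^sub>F k in sequentially. frac (r * real p ^ k) / real p ^ k \<le> inverse (real p ^ k)"
        using assms by (simp add: divide_inverse frac_lt_1 less_imp_le)
    qed auto
    then have "(\<lambda>k. r - frac (r * real p ^ k) / real p ^ k) \<longlonglongrightarrow> r - 0"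
      by (intro tendsto_diff) simp_all
    moreover have "r - frac (r * real p ^ k) / real p ^ k = t k" for k
      using assms by (simp add: t_def frac_def field_simps)
    ultimately have "t \<longlonglongrightarrow> r"
      by simp
    moreover have "padic_rat p (t k)" for k
      unfolding t_def padic_rat_def by blast
    ultimately show ?thesis
      unfolding closure_sequential by auto
  qed
  then show ?thesis
    by blast
qed

lemma padic_vec_add: "p > 0 \<Longrightarrow> padic_vec p x \<Longrightarrow> padic_vec p y \<Longrightarrow> padic_vec p (x + y)"
  unfolding padic_vec_def by (simp add: padic_rat_add)

lemma padic_vec_scaleR_Ints:
  assumes "padic_rat p t" "\<And>i. v $ i \<in> \<int>"
  shows "padic_vec p (t *\<^sub>R v)"
  unfolding padic_vec_def
proof
  fix i
  obtain z where "v $ i = of_int z"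
    using assms(2) Ints_cases by blast
  then show "padic_rat p ((t *\<^sub>R v) $ i)"
    using padic_rat_mult[OF assms(1) padic_rat_of_int] by simp
qed

lemma closure_padic_vec:
  assumes "p \<ge> 2"
  shows "closure {x :: real ^ 'n. padic_vec p x} = UNIV"
proof -
  have "x \<in> closure {x. padic_vec p x}" for x :: "real ^ 'n"
  proof -
    have "\<forall>i. \<exists>t. (\<forall>k. padic_rat p (t k)) \<and> t \<longlonglongrightarrow> x $ i"
      using closure_padic_rat[OF assms] by (auto simp: closure_sequential)
    then obtain t where t: "\<And>i k. padic_rat p (t i k)" "\<And>i. t i \<longlonglongrightarrow> x $ i"
      by metis
    have "(\<lambda>k. \<chi> i. t i k) \<longlonglongrightarrow> (\<chi> i. x $ i)"
      using t(2) by (intro tendsto_vec_lambda)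
    moreover have "padic_vec p (\<chi> i. t i k)" for k
      using t(1) by (simp add: padic_vec_def)
    ultimately show ?thesis
      unfolding closure_sequential by (intro exI[of _ "\<lambda>k. \<chi> i. t i k"]) simp
  qed
  then show ?thesis
    by blast
qed

definition rat_vec :: "real ^ 'n \<Rightarrow> bool" where
  "rat_vec x \<longleftrightarrow> (\<forall>i. x $ i \<in> \<rat>)"

lemma padic_vec_imp_rat_vec: "padic_vec p x \<Longrightarrow> rat_vec x"
  unfolding padic_vec_def rat_vec_def by (blast intro: padic_rat_imp_Rats)

lemma rat_vec_diff: "rat_vec x \<Longrightarrow> rat_vec y \<Longrightarrow> rat_vec (x - y)"
  unfolding rat_vec_def by auto

lemma rat_vec_sum: "(\<And>b. b \<in> B \<Longrightarrow> rat_vec (f b)) \<Longrightarrow> rat_vec (sum f B)"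
  unfolding rat_vec_def by auto

lemma rat_vec_scaleR: "c \<in> \<rat> \<Longrightarrow> rat_vec x \<Longrightarrow> rat_vec (c *\<^sub>R x)"
  unfolding rat_vec_def by auto

lemma inner_rat_vec: "rat_vec x \<Longrightarrow> rat_vec y \<Longrightarrow> x \<bullet> y \<in> \<rat>"
  unfolding rat_vec_def inner_vec_def by auto

lemma closure_rat_vec: "closure {x :: real ^ 'n. rat_vec x} = UNIV"
proof -
  have "closure {x :: real ^ 'n. padic_vec 2 x} \<subseteq> closure {x. rat_vec x}"
    by (intro closure_mono) (auto intro: padic_vec_imp_rat_vec)
  then show ?thesis
    by (auto simp: closure_padic_vec)
qed

lemma rat_vec_common_denominator:
  assumes "rat_vec q"
  obtains N :: int where "N > 0" "\<And>i. (of_int N *\<^sub>R q) $ i \<in> \<int>"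
proof -
  have "\<forall>i. \<exists>a b. b > 0 \<and> q $ i = of_int a / of_int b"
    using assms unfolding rat_vec_def by (metis Rats_cases')
  then obtain a b where ab: "\<And>i. b i > 0" "\<And>i. q $ i = of_int (a i) / of_int (b i)"
    by metis
  define N where "N = (\<Prod>i\<in>UNIV. b i)"
  have "(of_int N *\<^sub>R q) $ i \<in> \<int>" for i
  proof -
    have "N = b i * (\<Prod>j\<in>UNIV - {i}. b j)"
      unfolding N_def by (simp add: prod.remove)
    then have "(of_int N *\<^sub>R q) $ i = of_int ((\<Prod>j\<in>UNIV - {i}. b j) * a i)"
      using ab[of i] by simp
    then show ?thesis
      by (metis Ints_of_int)
  qed
  moreover have "N > 0"
    unfolding N_def using ab(1) by (simp add: prod_pos)
  ultimately show ?thesis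
    using that by blast
qed

lemma rat_vec_in_closure_padic_span:
  assumes "p \<ge> 2" "rat_vec q"
  shows "q \<in> closure {y \<in> span {q}. padic_vec p y}"
proof -
  obtain N :: int where N: "N > 0" "\<And>i. (of_int N *\<^sub>R q) $ i \<in> \<int>"
    using rat_vec_common_denominator[OF assms(2)] by blast
  have "1 / of_int N \<in> closure {r. padic_rat p r}"
    by (simp add: closure_padic_rat assms(1))
  then obtain t where t: "\<And>k. padic_rat p (t k)" "t \<longlonglongrightarrow> 1 / of_int N"
    unfolding closure_sequential by blast
  have "(\<lambda>k. t k *\<^sub>R (of_int N *\<^sub>R q)) \<longlonglongrightarrow> (1 / of_int N) *\<^sub>R (of_int N *\<^sub>R q)"
    using t(2) by (intro tendsto_scaleR tendsto_const)
  moreover have "(1 / of_int N) *\<^sub>R (of_int N *\<^sub>R q) = q"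
    using N(1) by simp
  moreover have "t k *\<^sub>R (of_int N *\<^sub>R q) \<in> {y \<in> span {q}. padic_vec p y}" for k
    using padic_vec_scaleR_Ints[OF t(1) N(2)] by (simp add: span_base span_mul)
  ultimately show ?thesis
    unfolding closure_sequential by (intro exI[of _ "\<lambda>k. t k *\<^sub>R (of_int N *\<^sub>R q)"]) simp
qed

definition orth_residual :: "'a::real_inner set \<Rightarrow> 'a \<Rightarrow> 'a" where
  "orth_residual B x = x - (\<Sum>b\<in>B. (b \<bullet> x / (b \<bullet> b)) *\<^sub>R b)"

lemma orthogonal_orth_residual:
  fixes B :: "'a::euclidean_space set"
  shows "pairwise orthogonal B \<Longrightarrow> y \<in> span B \<Longrightarrow> orthogonal y (orth_residual B x)"
  unfolding orth_residual_def by (rule Gram_Schmidt_step)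

lemma orth_residual_eq_self:
  "(\<And>b. b \<in> B \<Longrightarrow> orthogonal b x) \<Longrightarrow> orth_residual B x = x"
  unfolding orth_residual_def orthogonal_def by simp

lemma span_insert_orth_residual:
  fixes B :: "'a::euclidean_space set"
  shows "span (insert (orth_residual B a) B) = span (insert a B)"
  unfolding orth_residual_def
  by (simp add: span_neg span_sum span_base span_mul eq_span_insert_eq)

lemma continuous_on_orth_residual: "continuous_on S (orth_residual B)"
proof -
  have eq: "orth_residual B = (\<lambda>x. x - (\<Sum>b\<in>B. (inverse (b \<bullet> b) * (b \<bullet> x)) *\<^sub>R b))"
    by (auto simp: orth_residual_def fun_eq_iff divide_inverse mult.commute)
  show ?thesis
    unfolding eq by (intro continuous_intros)
qed

lemma rat_vec_orth_residual:
  "(\<And>b. b \<in> B \<Longrightarrow> rat_vec b) \<Longrightarrow> rat_vec x \<Longrightarrow> rat_vec (orth_residual B x)"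
  unfolding orth_residual_def
  by (auto intro!: rat_vec_diff rat_vec_sum rat_vec_scaleR Rats_divide inner_rat_vec)

lemma rational_orthogonal_basis:
  fixes T :: "(real ^ 'n) set"
  assumes "finite T" "\<And>t. t \<in> T \<Longrightarrow> rat_vec t"
  shows "\<exists>B. (\<forall>b\<in>B. rat_vec b) \<and> pairwise orthogonal B \<and> span B = span T"
  using assms
proof (induction T rule: finite_induct)
  case empty
  then show ?case
    by (intro exI[of _ "{}"]) simp
next
  case (insert a T)
  then obtain B where B: "\<forall>b\<in>B. rat_vec b" "pairwise orthogonal B" "span B = span T"
    by auto
  define a' where "a' = orth_residual B a"
  have "rat_vec a'"
    unfolding a'_def using B(1) insert.prems by (simp add: rat_vec_orth_residual)
  moreover have "orthogonal a' b" if "b \<in> B" for b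
    using orthogonal_orth_residual[OF B(2) span_base[OF that]]
    by (simp add: a'_def orthogonal_commute)
  then have "pairwise orthogonal (insert a' B)"
    using B(2) by (simp add: pairwise_orthogonal_insert)
  moreover have "span (insert a' B) = span (insert a T)"
  proof -
    have "span (insert a' B) = span (insert a B)"
      by (simp add: a'_def span_insert_orth_residual)
    also have "\<dots> = span (insert a T)"
      using B(3) by (simp add: span_insert)
    finally show ?thesis .
  qed
  ultimately show ?case
    using B(1) by (intro exI[of _ "insert a' B"]) auto
qed

lemma rational_projection_onto_orthogonal_comp:
  fixes T :: "(real ^ 'n) set"
  assumes "finite T" "\<And>t. t \<in> T \<Longrightarrow> rat_vec t"
  obtains P where "continuous_on UNIV P" "\<And>x. P x \<in> T\<^sup>\<bottom>" "\<And>y. y \<in> T\<^sup>\<bottom> \<Longrightarrow> P y = y"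
    "\<And>x. rat_vec x \<Longrightarrow> rat_vec (P x)"
proof -
  obtain B where B: "\<forall>b\<in>B. rat_vec b" "pairwise orthogonal B" "span B = span T"
    using rational_orthogonal_basis[OF assms] by blast
  show ?thesis
  proof (rule that)
    show "continuous_on UNIV (orth_residual B)"
      by (rule continuous_on_orth_residual)
    show "rat_vec (orth_residual B x)" if "rat_vec x" for x
      using B(1) that by (simp add: rat_vec_orth_residual)
    show "orth_residual B x \<in> T\<^sup>\<bottom>" for x
      using orthogonal_orth_residual[OF B(2)] B(3)
      by (auto simp: orthogonal_comp_def intro: span_base)
    show "orth_residual B y = y" if "y \<in> T\<^sup>\<bottom>" for y
    proof (rule orth_residual_eq_self)
      fix b assume "b \<in> B"
      then have "b \<in> span T"
        using B(3) span_base by blast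
      moreover have "orthogonal y t" if "t \<in> T" for t
        using \<open>y \<in> T\<^sup>\<bottom>\<close> that by (simp add: orthogonal_comp_def orthogonal_commute)
      ultimately show "orthogonal b y"
        using orthogonal_to_span orthogonal_commute by blast
    qed
  qed
qed

lemma orthogonal_comp_subset_closure_rat_vec:
  fixes T :: "(real ^ 'n) set"
  assumes "finite T" "\<And>t. t \<in> T \<Longrightarrow> rat_vec t"
  shows "T\<^sup>\<bottom> \<subseteq> closure {y \<in> T\<^sup>\<bottom>. rat_vec y}"
proof
  fix y assume y: "y \<in> T\<^sup>\<bottom>"
  obtain P where P: "continuous_on UNIV P" "\<And>x. P x \<in> T\<^sup>\<bottom>" "\<And>y. y \<in> T\<^sup>\<bottom> \<Longrightarrow> P y = y"
    "\<And>x. rat_vec x \<Longrightarrow> rat_vec (P x)"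
    using rational_projection_onto_orthogonal_comp[OF assms] by blast
  have "y \<in> closure {x. rat_vec x}"
    by (simp add: closure_rat_vec)
  then obtain X where X: "\<And>k. rat_vec (X k)" "X \<longlonglongrightarrow> y"
    unfolding closure_sequential by blast
  have "(\<lambda>k. P (X k)) \<longlonglongrightarrow> P y"
    using continuous_on_tendsto_compose[OF P(1) X(2)] by simp
  then show "y \<in> closure {y \<in> T\<^sup>\<bottom>. rat_vec y}"
    unfolding closure_sequential P(3)[OF y]
    by (intro exI[of _ "\<lambda>k. P (X k)"]) (simp add: P(2,4) X(1))
qed

lemma orthogonal_comp_subset_closure_padic_vec:
  fixes T :: "(real ^ 'n) set"
  assumes "p \<ge> 2" "finite T" "\<And>t. t \<in> T \<Longrightarrow> rat_vec t"
  shows "T\<^sup>\<bottom> \<subseteq> closure {y \<in> T\<^sup>\<bottom>. padic_vec p y}"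
proof -
  have "{y \<in> T\<^sup>\<bottom>. rat_vec y} \<subseteq> closure {y \<in> T\<^sup>\<bottom>. padic_vec p y}"
  proof
    fix q assume q: "q \<in> {y \<in> T\<^sup>\<bottom>. rat_vec y}"
    then have "span {q} \<subseteq> T\<^sup>\<bottom>"
      by (simp add: span_minimal subspace_orthogonal_comp)
    then have "closure {y \<in> span {q}. padic_vec p y} \<subseteq> closure {y \<in> T\<^sup>\<bottom>. padic_vec p y}"
      by (intro closure_mono) blast
    then show "q \<in> closure {y \<in> T\<^sup>\<bottom>. padic_vec p y}"
      using rat_vec_in_closure_padic_span[OF assms(1)] q by blast
  qed
  then have "closure {y \<in> T\<^sup>\<bottom>. rat_vec y} \<subseteq> closure {y \<in> T\<^sup>\<bottom>. padic_vec p y}"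
    by (simp add: closure_minimal)
  then show ?thesis
    using orthogonal_comp_subset_closure_rat_vec[OF assms(2,3)] by blast
qed

lemma rational_equations_subset_closure_padic_vec:
  fixes F :: "'i set" and r :: "'i \<Rightarrow> real ^ 'n" and c :: "'i \<Rightarrow> real"
  defines "S \<equiv> {x. \<forall>i\<in>F. r i \<bullet> x = c i}"
  assumes "p \<ge> 2" "finite F" "\<And>i. i \<in> F \<Longrightarrow> rat_vec (r i)"
    and "x0 \<in> S" "padic_vec p x0"
  shows "S \<subseteq> closure {x \<in> S. padic_vec p x}"
proof
  fix x assume "x \<in> S"
  define L where "L = (r ` F)\<^sup>\<bottom>"
  have L_dense: "L \<subseteq> closure {y \<in> L. padic_vec p y}"
    unfolding L_def using assms(3,4) by (intro orthogonal_comp_subset_closure_padic_vec[OF assms(2)]) auto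
  have "x - x0 \<in> L"
    using \<open>x \<in> S\<close> \<open>x0 \<in> S\<close>
    by (simp add: S_def L_def orthogonal_comp_def orthogonal_def inner_diff_right)
  then have "x \<in> (+) x0 ` closure {y \<in> L. padic_vec p y}"
    using L_dense by (intro image_eqI[of _ _ "x - x0"]) auto
  also have "\<dots> = closure ((+) x0 ` {y \<in> L. padic_vec p y})"
    by (rule closure_translation[symmetric])
  also have "\<dots> \<subseteq> closure {x \<in> S. padic_vec p x}"
    using \<open>x0 \<in> S\<close> assms(2,6)
    by (intro closure_mono)
      (auto simp: S_def L_def orthogonal_comp_def orthogonal_def inner_add_right intro: padic_vec_add)
  finally show "x \<in> closure {x \<in> S. padic_vec p x}" .
qed

lemma int_linear_system_subset_closure_padic_vec:
  fixes A :: "int ^ 'n ^ 'm" and b :: "int ^ 'm"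
  defines "S \<equiv> {x :: real ^ 'n. int_mat_to_real A *v x = int_vec_to_real b}"
  assumes "p \<ge> 2" "x0 \<in> S" "padic_vec p x0"
  shows "S \<subseteq> closure {x \<in> S. padic_vec p x}"
proof -
  have S_eq: "S = {x. \<forall>i\<in>UNIV. int_mat_to_real A $ i \<bullet> x = of_int (b $ i)}"
    by (auto simp: S_def vec_eq_iff matrix_vector_mul_component int_vec_to_real_def)
  have A_rat: "rat_vec (int_mat_to_real A $ i)" for i
    by (simp add: rat_vec_def int_mat_to_real_def)
  from assms(3,4) show ?thesis
    unfolding S_eq
    by (rule rational_equations_subset_closure_padic_vec[OF assms(2) finite_class.finite_UNIV A_rat])
qed

lemma polyhedron_eq_rows: "polyhedron C d = {x. \<forall>i. C $ i \<bullet> x \<le> d $ i}"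
  by (simp add: polyhedron_def matrix_vector_mul_component)

lemma convex_polyhedron: "convex (polyhedron C d)"
proof -
  have "polyhedron C d = (\<Inter>i. {x. C $ i \<bullet> x \<le> d $ i})"
    by (auto simp: polyhedron_eq_rows)
  then show ?thesis
    by (simp add: convex_INT convex_halfspace_le)
qed

lemma supporting_hyperplane_through_rel_interior:
  fixes S :: "'a::euclidean_space set"
  assumes "convex S" "\<And>y. y \<in> S \<Longrightarrow> a \<bullet> y \<le> b" "x \<in> rel_interior S" "a \<bullet> x = b"
  shows "S \<subseteq> {y. a \<bullet> y = b}"
proof -
  have "(S \<inter> {y. a \<bullet> y = b}) face_of S"
    using assms(1,2) by (rule face_of_Int_supporting_hyperplane_le)
  moreover have "x \<in> (S \<inter> {y. a \<bullet> y = b}) \<inter> rel_interior S"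
    using assms(3,4) rel_interior_subset by blast
  ultimately have "S \<inter> {y. a \<bullet> y = b} = S"
    using face_of_disjoint_rel_interior[of "S \<inter> {y. a \<bullet> y = b}" S] by auto
  then show ?thesis
    by blast
qed

lemma rel_interior_polyhedron_strict_ineq:
  assumes "x \<in> rel_interior (polyhedron C d)" "y \<in> polyhedron C d" "C $ i \<bullet> y \<noteq> d $ i"
  shows "C $ i \<bullet> x < d $ i"
proof -
  have "x \<in> polyhedron C d"
    using assms(1) rel_interior_subset by blast
  then have "C $ i \<bullet> x \<le> d $ i"
    by (simp add: polyhedron_eq_rows)
  moreover have "C $ i \<bullet> x \<noteq> d $ i"
  proof
    assume "C $ i \<bullet> x = d $ i"
    then have "polyhedron C d \<subseteq> {y. C $ i \<bullet> y = d $ i}"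
      by (intro supporting_hyperplane_through_rel_interior[OF convex_polyhedron _ assms(1)])
        (auto simp: polyhedron_eq_rows)
    then show False
      using assms(2,3) by blast
  qed
  ultimately show ?thesis
    by simp
qed

lemma affine_hull_subset_hyperplanes:
  fixes a :: "'i \<Rightarrow> 'a::real_inner"
  assumes "\<And>i y. i \<in> I \<Longrightarrow> y \<in> S \<Longrightarrow> a i \<bullet> y = b i"
  shows "affine hull S \<subseteq> {x. \<forall>i\<in>I. a i \<bullet> x = b i}"
proof (rule hull_minimal)
  show "S \<subseteq> {x. \<forall>i\<in>I. a i \<bullet> x = b i}"
    using assms by blast
  have "{x. \<forall>i\<in>I. a i \<bullet> x = b i} = (\<Inter>i\<in>I. {x. a i \<bullet> x = b i})"
    by auto
  then show "affine {x. \<forall>i\<in>I. a i \<bullet> x = b i}"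
    by (auto intro: affine_hyperplane)
qed

lemma padic_vec_in_polyhedron_if_in_affine_hull:
  fixes C :: "real ^ 'n ^ 'k"
  assumes "p \<ge> 2" "\<And>i j. C $ i $ j \<in> \<rat>" "polyhedron C d \<noteq> {}"
    and "z \<in> affine hull (polyhedron C d)" "padic_vec p z"
  shows "\<exists>x\<in>polyhedron C d. padic_vec p x"
proof -
  define P where "P = polyhedron C d"
  define I where "I = {i. \<forall>x\<in>P. C $ i \<bullet> x = d $ i}"
  define E where "E = {x. \<forall>i\<in>I. C $ i \<bullet> x = d $ i}"
  define U where "U = (\<Inter>i\<in>-I. {x. C $ i \<bullet> x < d $ i})"
  have "P \<subseteq> E"
    by (auto simp: E_def I_def)
  have "affine hull P \<subseteq> E"
    unfolding E_def by (rule affine_hull_subset_hyperplanes) (simp add: I_def)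
  then have "z \<in> E"
    using assms(4) unfolding P_def by (rule subsetD)
  then have E_dense: "E \<subseteq> closure {x \<in> E. padic_vec p x}"
    unfolding E_def using assms(1,2,5)
    by (intro rational_equations_subset_closure_padic_vec) (auto simp: rat_vec_def)
  obtain xs where xs: "xs \<in> rel_interior P"
    using rel_interior_eq_empty[OF convex_polyhedron] assms(3) unfolding P_def by blast
  then have "xs \<in> closure {x \<in> E. padic_vec p x}"
    using rel_interior_subset \<open>P \<subseteq> E\<close> E_dense by blast
  moreover have "xs \<in> U"
    using rel_interior_polyhedron_strict_ineq xs unfolding U_def I_def P_def by blast
  moreover have "open U"
    unfolding U_def by (simp add: open_INT open_halfspace_lt)
  ultimately have "U \<inter> {x \<in> E. padic_vec p x} \<noteq> {}"
    using open_Int_closure_eq_empty[of U "{x \<in> E. padic_vec p x}"] by blast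
  then obtain x where x: "x \<in> U" "x \<in> E" "padic_vec p x"
    by blast
  have "C $ i \<bullet> x \<le> d $ i" for i
    using x(1,2) unfolding U_def E_def by (cases "i \<in> I") (auto intro: less_imp_le)
  then show ?thesis
    using x(3) by (auto simp: P_def polyhedron_eq_rows)
qed

lemma padic_vec_in_polyhedron_iff_in_affine_hull:
  fixes C :: "real ^ 'n ^ 'k"
  assumes "p \<ge> 2" "\<forall>i j. C $ i $ j \<in> \<rat>" "polyhedron C d \<noteq> {}"
  shows "(\<exists>x\<in>polyhedron C d. padic_vec p x) \<longleftrightarrow> (\<exists>x\<in>affine hull (polyhedron C d). padic_vec p x)"
  using padic_vec_in_polyhedron_if_in_affine_hull[OF assms(1) _ assms(3)] assms(2)
    hull_subset[of "polyhedron C d" affine]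
  by blast

theorem lemma2p2:
  fixes p :: nat
    and A :: "int ^ 'n ^ 'm" and b :: "int ^ 'm"
  assumes "prime p"
  shows "(let S = {x :: real ^ 'n. int_mat_to_real A *v x = int_vec_to_real b} in
           (\<exists>x\<in>S. padic_vec p x) \<longrightarrow> S \<subseteq> closure {x\<in>S. padic_vec p x})
         \<and> (\<forall>(C :: real ^ 'n ^ 'k) (d :: real ^ 'k).
              (\<forall>i j. C $ i $ j \<in> \<rat>) \<longrightarrow> (\<forall>i. d $ i \<in> \<rat>) \<longrightarrow>
              polyhedron C d \<noteq> {} \<longrightarrow>
              ((\<exists>x\<in>polyhedron C d. padic_vec p x) \<longleftrightarrow>
               (\<exists>x\<in>affine hull (polyhedron C d). padic_vec p x)))"
proof -
  have p: "p \<ge> 2"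
    using assms prime_ge_2_nat by blast
  show ?thesis
    unfolding Let_def
    using int_linear_system_subset_closure_padic_vec[OF p, where A = A and b = b]
    by (simp add: padic_vec_in_polyhedron_iff_in_affine_hull[OF p]) blast
qed

end
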